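(* Let $n\ge 2$ be an integer and let $p$ be a real polynomial of degree at most $n-2$ that is non-negative on $[-1,1]$ and satisfies $p(1)=1$. Then $$\max_{x\in[-1,1]}|(1-x)^2p(x)|\ \ge\ \frac{16}{n^2}\tan^2\!\left(\frac{\pi}{2n}\right).$$ Moreover, equality holds if and only if $$p(x)=S_{n-2}(x):=\frac{8}{n^2}\tan^2\!\left(\frac{\pi}{2n}\right)\frac{1}{(1-x)^2}\left(1+T_n\!\left(\frac{1+\cos(\pi/n)}{2}(x+1)-1\right)\right).$$
   Context: $T_n$ denotes the Chebyshev polynomial of the first kind of degree $n$, $T_n(\cos\theta)=\cos(n\theta)$. The expression defining $S_{n-2}$ is a polynomial (the singularity at $x=1$ is removable). *)

theory Defs
  imports "HOL-Analysis.Analysis" "HOL-Computational_Algebra.Polynomial"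
begin

fun cheb_T :: "nat \<Rightarrow> real poly" where
  "cheb_T 0 = 1"
| "cheb_T (Suc 0) = [:0, 1:]"
| "cheb_T (Suc (Suc n)) = [:0, 2:] * cheb_T (Suc n) - cheb_T n"

text \<open>The extremal polynomial S_{n-2}: the numerator polynomial divided by (1-x)^2
  (the division is exact, the singularity at x = 1 being removable).\<close>
definition S_extr :: "nat \<Rightarrow> real poly" where
  "S_extr n =
     (let a = (1 + cos (pi / real n)) / 2;
          c = 8 / (real n)^2 * (tan (pi / (2 * real n)))^2
      in smult c (1 + pcompose (cheb_T n) [:a - 1, a:]) div ([:1, -1:]^2))"

end

theory Submission
  imports Defs
begin

(* With a = cos^2 (pi/(2n)) and c = 8 tan^2 (pi/(2n)) / n^2, the polynomial
   F(x) = c (1 + T_n (a (x + 1) - 1)) lies in [0, 2c] on [-1, 1] and has a double root at 1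
   with F''(1) = 2, so F = (1 - x)^2 S_{n-2} and S_{n-2}(1) = 1.  At the n - 1 nodes
   x_2 > ... > x_n = -1 where a (x_k + 1) - 1 = cos (k pi / n), F equals 2c for even k and 0 for
   odd k.  The Lagrange weights that recover the value at 1 of a polynomial of degree at most n - 2
   from its values at these nodes alternate in sign; hence a polynomial whose values at the nodes
   alternate in sign the same way is nonnegative at 1, and vanishes there only if it is zero.
   If |(1 - x)^2 p| <= M on [-1, 1], then (M / 2c) S_{n-2} - p is such a polynomial; its value
   at 1 is M / 2c - 1, so M >= 2c, with equality only if p = S_{n-2}.  Conversely
   |(1 - x)^2 S_{n-2}| = |F| <= 2c on [-1, 1]. *)

lemma poly_cheb_T_cos: "poly (cheb_T n) (cos t) = cos (real n * t)"
proof (induction n rule: cheb_T.induct)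
  case (3 n)
  have "cos (real (Suc (Suc n)) * t) = 2 * cos t * cos (real (Suc n) * t) - cos (real n * t)"
    using cos_add[of "real (Suc n) * t" t] cos_diff[of "real (Suc n) * t" t]
    by (simp add: algebra_simps)
  with 3 show ?case by simp
qed simp_all

lemma degree_cheb_T_le: "degree (cheb_T n) \<le> n"
proof (induction n rule: cheb_T.induct)
  case (3 n)
  have "degree ([:0, 2:] * cheb_T (Suc n)) \<le> Suc (Suc n)"
    using degree_mult_le[of "[:0, 2:]" "cheb_T (Suc n)"] 3 by simp
  with 3 show ?case by (simp add: degree_diff_le)
qed simp_all

lemma abs_poly_cheb_T_le_1:
  assumes "\<bar>y\<bar> \<le> 1"
  shows "\<bar>poly (cheb_T n) y\<bar> \<le> 1"
  using assms poly_cheb_T_cos[of n "arccos y"] by (simp add: cos_arccos_abs)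

lemma poly_pderiv_cheb_T_cos:
  "poly (pderiv (cheb_T n)) (cos t) * sin t = real n * sin (real n * t)"
proof -
  have "((\<lambda>t. poly (cheb_T n) (cos t)) has_real_derivative
          poly (pderiv (cheb_T n)) (cos t) * - sin t) (at t)"
    by (rule DERIV_chain2[OF poly_DERIV]) (auto intro!: derivative_eq_intros)
  moreover have "((\<lambda>t. poly (cheb_T n) (cos t)) has_real_derivative
          - sin (real n * t) * real n) (at t)"
    unfolding poly_cheb_T_cos by (auto intro!: derivative_eq_intros)
  ultimately have "poly (pderiv (cheb_T n)) (cos t) * - sin t = - sin (real n * t) * real n"
    by (rule DERIV_unique)
  then show ?thesis by simp
qed

lemma poly_pderiv2_cheb_T_cos:
  "poly (pderiv (pderiv (cheb_T n))) (cos t) * (sin t)^2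
     = poly (pderiv (cheb_T n)) (cos t) * cos t - (real n)^2 * cos (real n * t)"
proof -
  have "((\<lambda>t. poly (pderiv (cheb_T n)) (cos t) * sin t) has_real_derivative
          poly (pderiv (pderiv (cheb_T n))) (cos t) * - sin t * sin t
          + poly (pderiv (cheb_T n)) (cos t) * cos t) (at t)"
    by (auto intro!: derivative_eq_intros DERIV_chain2[OF poly_DERIV])
  moreover have "((\<lambda>t. poly (pderiv (cheb_T n)) (cos t) * sin t) has_real_derivative
          real n * (cos (real n * t) * real n)) (at t)"
    unfolding poly_pderiv_cheb_T_cos by (auto intro!: derivative_eq_intros)
  ultimately have "poly (pderiv (pderiv (cheb_T n))) (cos t) * - sin t * sin t
          + poly (pderiv (cheb_T n)) (cos t) * cos t = real n * (cos (real n * t) * real n)"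
    by (rule DERIV_unique)
  then show ?thesis by (simp add: power2_eq_square algebra_simps)
qed

lemma lagrange_interpolation:
  fixes g :: "'a :: field poly" and x :: "'b \<Rightarrow> 'a"
  assumes "finite K" "inj_on x K" "degree g < card K"
  shows "poly g z = (\<Sum>k\<in>K. poly g (x k) * (\<Prod>j\<in>K-{k}. (z - x j) / (x k - x j)))"
proof -
  define I where "I = (\<Sum>k\<in>K. smult (poly g (x k) / (\<Prod>j\<in>K-{k}. x k - x j))
                                    (\<Prod>j\<in>K-{k}. [:- x j, 1:]))"
  have poly_I: "poly I y = (\<Sum>k\<in>K. poly g (x k) * (\<Prod>j\<in>K-{k}. (y - x j) / (x k - x j)))" for y
    unfolding I_def by (simp add: poly_sum poly_prod prod_dividef)
  have "degree I \<le> card K - 1"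
    unfolding I_def
  proof (intro degree_sum_le order.trans[OF degree_smult_le])
    fix k assume "k \<in> K"
    have "degree (\<Prod>j\<in>K-{k}. [:- x j, 1:]) = (\<Sum>j\<in>K-{k}. degree [:- x j, 1:])"
      by (rule degree_prod_eq_sum_degree) simp
    also have "\<dots> = card K - 1" using \<open>k \<in> K\<close> assms(1) by simp
    finally show "degree (\<Prod>j\<in>K-{k}. [:- x j, 1:]) \<le> card K - 1" by simp
  qed (use assms(1) in simp)
  moreover have "poly I (x m) = poly g (x m)" if "m \<in> K" for m
  proof -
    have basis: "(\<Prod>j\<in>K-{k}. (x m - x j) / (x k - x j)) = (if k = m then 1 else 0)"
      if "k \<in> K" for k
      using \<open>m \<in> K\<close> that assms(1,2) by (auto simp: inj_on_eq_iff intro!: prod.neutral)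
    have "poly I (x m) = (\<Sum>k\<in>K. if k = m then poly g (x k) else 0)"
      unfolding poly_I by (rule sum.cong[OF refl]) (simp add: basis)
    then show ?thesis using \<open>m \<in> K\<close> assms(1) by simp
  qed
  ultimately have "g = I"
    using assms by (intro poly_eqI_degree[of "x ` K"]) (auto simp: card_image)
  then have "poly g z = poly I z" by simp
  also have "\<dots> = (\<Sum>k\<in>K. poly g (x k) * (\<Prod>j\<in>K-{k}. (z - x j) / (x k - x j)))"
    by (rule poly_I)
  finally show ?thesis .
qed

lemma lagrange_basis_sign:
  fixes x :: "nat \<Rightarrow> real"
  assumes decreasing: "\<And>i j. m \<le> i \<Longrightarrow> i < j \<Longrightarrow> j \<le> n \<Longrightarrow> x j < x i"
    and below: "\<And>j. m \<le> j \<Longrightarrow> j \<le> n \<Longrightarrow> x j < z"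
    and k: "k \<in> {m..n}"
  shows "0 < (-1)^(k - m) * (\<Prod>j\<in>{m..n}-{k}. (z - x j) / (x k - x j))"
proof -
  define f where "f j = (z - x j) / (x k - x j)" for j
  have "{m..n} - {k} = {m..<k} \<union> {k<..n}" "{m..<k} \<inter> {k<..n} = {}" using k by auto
  then have "(\<Prod>j\<in>{m..n}-{k}. f j) = (\<Prod>j\<in>{m..<k}. f j) * (\<Prod>j\<in>{k<..n}. f j)"
    using prod.union_disjoint[of "{m..<k}" "{k<..n}" f] by simp
  moreover have "(-1)^(k - m) * (\<Prod>j\<in>{m..<k}. f j) = (\<Prod>j\<in>{m..<k}. - f j)"
    by (simp add: prod_uminus)
  moreover have "0 < (\<Prod>j\<in>{m..<k}. - f j)"
  proof (intro prod_pos)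
    fix j assume "j \<in> {m..<k}"
    then have "0 < z - x j" "x k - x j < 0" using k decreasing[of j k] below[of j] by auto
    then show "0 < - f j" by (simp add: f_def divide_pos_neg)
  qed
  moreover have "0 < (\<Prod>j\<in>{k<..n}. f j)"
  proof (intro prod_pos)
    fix j assume "j \<in> {k<..n}"
    then have "0 < z - x j" "0 < x k - x j" using k decreasing[of k j] below[of j] by auto
    then show "0 < f j" by (simp add: f_def)
  qed
  ultimately show ?thesis
    unfolding f_def[symmetric] by (simp only: mult.assoc[symmetric] mult_pos_pos)
qed

lemma alternating_at_nodes_imp_poly_nonneg:
  fixes g :: "real poly" and x :: "nat \<Rightarrow> real"
  assumes decreasing: "\<And>i j. m \<le> i \<Longrightarrow> i < j \<Longrightarrow> j \<le> n \<Longrightarrow> x j < x i"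
    and below: "\<And>j. m \<le> j \<Longrightarrow> j \<le> n \<Longrightarrow> x j < z"
    and "m \<le> n" "degree g \<le> n - m"
    and alternating: "\<And>k. k \<in> {m..n} \<Longrightarrow> 0 \<le> (-1)^(k - m) * poly g (x k)"
  shows "0 \<le> poly g z" and "poly g z = 0 \<Longrightarrow> g = 0"
proof -
  define L where "L k = (-1)^(k - m) * (\<Prod>j\<in>{m..n}-{k}. (z - x j) / (x k - x j))" for k
  define t where "t k = (-1)^(k - m) * poly g (x k) * L k" for k
  have L_pos: "0 < L k" if "k \<in> {m..n}" for k
    unfolding L_def using decreasing below that by (rule lagrange_basis_sign)
  have inj: "inj_on x {m..n}"
  proof (rule linorder_inj_onI')
    fix i j assume "i \<in> {m..n}" "j \<in> {m..n}" "i < j"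
    then show "x i \<noteq> x j" using decreasing[of i j] by simp
  qed
  have "poly g z = (\<Sum>k\<in>{m..n}. poly g (x k) * (\<Prod>j\<in>{m..n}-{k}. (z - x j) / (x k - x j)))"
    using inj assms(3,4) by (intro lagrange_interpolation) auto
  also have "\<dots> = (\<Sum>k\<in>{m..n}. t k)"
    unfolding t_def L_def by (rule sum.cong[OF refl]) (simp flip: power_mult_distrib)
  finally have g_z: "poly g z = (\<Sum>k\<in>{m..n}. t k)" .
  have t_nonneg: "0 \<le> t k" if "k \<in> {m..n}" for k
    unfolding t_def using alternating[OF that] L_pos[OF that] by simp
  then show "0 \<le> poly g z" unfolding g_z by (rule sum_nonneg)
  assume "poly g z = 0"
  then have t_zero: "t k = 0" if "k \<in> {m..n}" for k
    using sum_nonneg_eq_0_iff[of "{m..n}" t] t_nonneg that by (simp add: g_z)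
  have "poly g (x k) = 0" if "k \<in> {m..n}" for k
    using t_zero[OF that] L_pos[OF that] unfolding t_def by simp
  then show "g = 0"
    using inj assms(3,4) by (intro poly_eqI_degree[of "x ` {m..n}"]) (auto simp: card_image)
qed

lemma square_linear_dvd_of_double_root:
  fixes F :: "'a :: idom poly"
  assumes "poly F a = 0" "poly (pderiv F) a = 0"
  shows "[:-a, 1:]^2 dvd F"
proof -
  define u where "u = [:-a, 1:]"
  have u: "poly u a = 0" "pderiv u = 1" by (simp_all add: u_def pderiv_pCons)
  obtain G where G: "F = u * G" using assms(1) by (auto simp: u_def poly_eq_0_iff_dvd)
  then have "pderiv F = u * pderiv G + G" by (simp add: pderiv_mult u)
  then have "poly G a = 0" using assms(2) u by simp
  then obtain H where "G = u * H" by (auto simp: u_def poly_eq_0_iff_dvd)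
  with G have "F = u^2 * H" by (simp add: power2_eq_square mult.assoc)
  then show ?thesis unfolding u_def by (rule dvdI)
qed

lemma poly_pderiv2_square_linear_mult:
  fixes S :: "'a :: idom poly"
  shows "poly (pderiv (pderiv ([:-a, 1:]^2 * S))) a = 2 * poly S a"
proof -
  define u where "u = [:-a, 1:]"
  have u: "poly u a = 0" "pderiv u = 1" by (simp_all add: u_def pderiv_pCons)
  have "pderiv (u^2 * S) = u * (u * pderiv S + 2 * S)"
    by (simp add: pderiv_mult power2_eq_square u algebra_simps)
  then have "pderiv (pderiv (u^2 * S))
             = u * pderiv (u * pderiv S + 2 * S) + (u * pderiv S + 2 * S)"
    by (simp add: pderiv_mult u)
  then show ?thesis using u by (simp add: u_def)
qed

definition extr_scale :: "nat \<Rightarrow> real" where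
  "extr_scale n = (1 + cos (pi / real n)) / 2"

definition extr_const :: "nat \<Rightarrow> real" where
  "extr_const n = 8 / (real n)^2 * (tan (pi / (2 * real n)))^2"

definition extr_numer :: "nat \<Rightarrow> real poly" where
  "extr_numer n = smult (extr_const n) (1 + pcompose (cheb_T n) [:extr_scale n - 1, extr_scale n:])"

definition extr_node :: "nat \<Rightarrow> nat \<Rightarrow> real" where
  "extr_node n k = (cos (real k * pi / real n) + 1) / extr_scale n - 1"

lemma S_extr_eq_div: "S_extr n = extr_numer n div [:1, -1:]^2"
  unfolding S_extr_def extr_numer_def extr_scale_def extr_const_def Let_def ..

lemma extr_scale_eq_cos_sq: "extr_scale n = (cos (pi / (2 * real n)))^2"
proof -
  have "cos (pi / real n) = cos (2 * (pi / (2 * real n)))" by simp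
  also have "\<dots> = 2 * (cos (pi / (2 * real n)))^2 - 1" by (rule cos_double_cos)
  finally show ?thesis by (simp add: extr_scale_def)
qed

lemma extr_scale_le_1: "extr_scale n \<le> 1"
  by (simp add: extr_scale_def)

lemma pi_over_2n_bounds:
  assumes "2 \<le> n"
  shows "0 < pi / (2 * real n)" "pi / (2 * real n) < pi / 2"
proof -
  show "0 < pi / (2 * real n)" using assms by simp
  show "pi / (2 * real n) < pi / 2" using assms by (intro divide_strict_left_mono) auto
qed

lemma extr_scale_pos:
  assumes "2 \<le> n"
  shows "0 < extr_scale n"
proof -
  have "0 < cos (pi / (2 * real n))"
    by (intro cos_gt_zero) (use pi_over_2n_bounds[OF assms] in auto)
  then show ?thesis by (simp add: extr_scale_eq_cos_sq)
qed

lemma extr_const_pos: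
  assumes "2 \<le> n"
  shows "0 < extr_const n"
proof -
  have "0 < tan (pi / (2 * real n))"
    by (intro tan_gt_zero) (use pi_over_2n_bounds[OF assms] in auto)
  then show ?thesis using assms by (simp add: extr_const_def)
qed

lemma poly_extr_numer:
  "poly (extr_numer n) x = extr_const n * (1 + poly (cheb_T n) (extr_scale n * (x + 1) - 1))"
  by (simp add: extr_numer_def poly_pcompose algebra_simps)

lemma poly_pderiv_extr_numer:
  "poly (pderiv (extr_numer n)) x
     = extr_const n * extr_scale n * poly (pderiv (cheb_T n)) (extr_scale n * (x + 1) - 1)"
  by (simp add: extr_numer_def pderiv_smult pderiv_add pderiv_pcompose pderiv_pCons
                poly_pcompose algebra_simps)

lemma poly_pderiv2_extr_numer:
  "poly (pderiv (pderiv (extr_numer n))) x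
     = extr_const n * (extr_scale n)^2 * poly (pderiv (pderiv (cheb_T n))) (extr_scale n * (x + 1) - 1)"
  by (simp add: extr_numer_def pderiv_smult pderiv_add pderiv_pcompose pderiv_pCons pderiv_mult
                poly_pcompose power2_eq_square algebra_simps)

lemma extr_scale_affine_at_1: "extr_scale n * (1 + 1) - 1 = cos (pi / real n)"
  by (simp add: extr_scale_def field_simps)

lemma poly_extr_numer_node:
  assumes "2 \<le> n"
  shows "poly (extr_numer n) (extr_node n k) = extr_const n * (1 + (-1)^k)"
proof -
  have "extr_scale n * (extr_node n k + 1) - 1 = cos (real k * pi / real n)"
    using extr_scale_pos[OF assms] by (simp add: extr_node_def)
  moreover have "real n * (real k * pi / real n) = real k * pi" using assms by simp
  ultimately show ?thesis
    by (simp add: poly_extr_numer poly_cheb_T_cos cos_int_times_real[of k pi])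
qed

lemma extr_node_1: "2 \<le> n \<Longrightarrow> extr_node n 1 = 1"
  using extr_scale_pos[of n] by (simp add: extr_node_def extr_scale_def field_simps)

lemma extr_node_n: "n \<noteq> 0 \<Longrightarrow> extr_node n n = -1"
  by (simp add: extr_node_def)

lemma extr_node_strict_decreasing:
  assumes "2 \<le> n" "j < k" "k \<le> n"
  shows "extr_node n k < extr_node n j"
proof -
  have "cos (real k * pi / real n) < cos (real j * pi / real n)"
  proof (rule cos_monotone_0_pi)
    show "real j * pi / real n < real k * pi / real n"
      using assms by (simp add: divide_strict_right_mono)
    have "real k * pi / real n \<le> real n * pi / real n"
      using assms by (intro divide_right_mono) auto
    then show "real k * pi / real n \<le> pi" using assms by simp
  qed simp
  then show ?thesis
    using extr_scale_pos[OF assms(1)] by (simp add: extr_node_def divide_strict_right_mono)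
qed

lemma extr_node_bounds:
  assumes "2 \<le> k" "k \<le> n"
  shows "-1 \<le> extr_node n k" "extr_node n k < 1"
proof -
  have "2 \<le> n" using assms by simp
  show "extr_node n k < 1"
    using extr_node_strict_decreasing[OF \<open>2 \<le> n\<close>, of 1 k] extr_node_1[OF \<open>2 \<le> n\<close>] assms
    by simp
  show "-1 \<le> extr_node n k"
    using extr_node_strict_decreasing[OF \<open>2 \<le> n\<close>, of k n] extr_node_n[of n] assms
    by (cases "k = n") auto
qed

lemma abs_poly_extr_numer_le:
  assumes "2 \<le> n" "\<bar>x\<bar> \<le> 1"
  shows "\<bar>poly (extr_numer n) x\<bar> \<le> 2 * extr_const n"
proof -
  have "0 \<le> extr_scale n * (x + 1)"
    using extr_scale_pos[OF assms(1)] assms(2) by simp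
  moreover have "extr_scale n * (x + 1) \<le> 1 * 2"
    using extr_scale_pos[OF assms(1)] extr_scale_le_1 assms(2) by (intro mult_mono) auto
  ultimately have "\<bar>poly (cheb_T n) (extr_scale n * (x + 1) - 1)\<bar> \<le> 1"
    by (intro abs_poly_cheb_T_le_1) auto
  then show ?thesis
    using extr_const_pos[OF assms(1)] by (auto simp: poly_extr_numer abs_le_iff)
qed

lemma extr_numer_double_root_1:
  assumes "2 \<le> n"
  shows "poly (extr_numer n) 1 = 0" "poly (pderiv (extr_numer n)) 1 = 0"
proof -
  have "real n * (pi / real n) = pi" using assms by simp
  then show "poly (extr_numer n) 1 = 0"
    by (simp only: poly_extr_numer extr_scale_affine_at_1 poly_cheb_T_cos) simp
  have "0 < sin (pi / real n)"
    using pi_over_2n_bounds[OF assms] by (intro sin_gt_zero) auto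
  moreover have "poly (pderiv (cheb_T n)) (cos (pi / real n)) * sin (pi / real n) = 0"
    using \<open>real n * (pi / real n) = pi\<close> by (simp add: poly_pderiv_cheb_T_cos)
  ultimately show "poly (pderiv (extr_numer n)) 1 = 0"
    by (simp only: poly_pderiv_extr_numer extr_scale_affine_at_1) simp
qed

lemma poly_pderiv2_extr_numer_1:
  assumes "2 \<le> n"
  shows "poly (pderiv (pderiv (extr_numer n))) 1 = 2"
proof -
  define h where "h = pi / (2 * real n)"
  have t: "pi / real n = 2 * h" "real n * (2 * h) = pi" using assms by (simp_all add: h_def)
  have "0 < sin h" "0 < cos h"
    using pi_over_2n_bounds[OF assms] by (auto simp: h_def intro!: sin_gt_zero cos_gt_zero)
  have "poly (pderiv (cheb_T n)) (cos (2 * h)) * sin (2 * h) = 0"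
    using t by (simp add: poly_pderiv_cheb_T_cos)
  then have "poly (pderiv (cheb_T n)) (cos (2 * h)) = 0"
    using \<open>0 < sin h\<close> \<open>0 < cos h\<close> by (simp add: sin_double)
  then have "poly (pderiv (pderiv (cheb_T n))) (cos (2 * h)) * (2 * sin h * cos h)^2 = (real n)^2"
    using poly_pderiv2_cheb_T_cos[of n "2 * h"] t by (simp add: sin_double)
  then have T2: "poly (pderiv (pderiv (cheb_T n))) (cos (2 * h))
                  = (real n)^2 / (4 * (sin h)^2 * (cos h)^2)"
    using \<open>0 < sin h\<close> \<open>0 < cos h\<close> by (simp add: field_simps)
  have "poly (pderiv (pderiv (extr_numer n))) 1
      = extr_const n * (extr_scale n)^2 * poly (pderiv (pderiv (cheb_T n))) (cos (2 * h))"
    by (simp only: poly_pderiv2_extr_numer extr_scale_affine_at_1 t)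
  also have "\<dots> = 8 / (real n)^2 * (sin h / cos h)^2 * ((cos h)^2)^2
                       * ((real n)^2 / (4 * (sin h)^2 * (cos h)^2))"
    unfolding T2 by (simp only: extr_const_def extr_scale_eq_cos_sq tan_def h_def)
  also have "\<dots> = 2"
    using assms \<open>0 < sin h\<close> \<open>0 < cos h\<close> by (simp add: field_simps)
  finally show ?thesis .
qed

lemma extr_numer_eq_mult_S_extr:
  assumes "2 \<le> n"
  shows "extr_numer n = [:-1, 1:]^2 * S_extr n"
proof -
  obtain H where H: "extr_numer n = [:-1, 1:]^2 * H"
    using square_linear_dvd_of_double_root[OF extr_numer_double_root_1[OF assms]] by auto
  have "[:1, -1:]^2 = ([:-1, 1:]^2 :: real poly)" by (simp add: power2_eq_square)
  then have "S_extr n = H" by (simp add: S_extr_eq_div H)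
  with H show ?thesis by simp
qed

lemma poly_extr_numer_eq_S_extr:
  "2 \<le> n \<Longrightarrow> poly (extr_numer n) x = (1 - x)^2 * poly (S_extr n) x"
  by (simp add: extr_numer_eq_mult_S_extr power2_eq_square algebra_simps)

lemma poly_S_extr_1: "2 \<le> n \<Longrightarrow> poly (S_extr n) 1 = 1"
  using poly_pderiv2_extr_numer_1 poly_pderiv2_square_linear_mult[of 1 "S_extr n"]
  by (simp add: extr_numer_eq_mult_S_extr)

lemma degree_S_extr:
  assumes "2 \<le> n"
  shows "degree (S_extr n) \<le> n - 2"
proof (cases "S_extr n = 0")
  case False
  have "degree (pcompose (cheb_T n) [:extr_scale n - 1, extr_scale n:]) \<le> n"
    using degree_cheb_T_le[of n] by (simp add: degree_pcompose)
  then have "degree (extr_numer n) \<le> n"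
    unfolding extr_numer_def by (metis degree_add_le degree_1 degree_smult_le le0 order.trans)
  moreover have "degree (extr_numer n) = 2 + degree (S_extr n)"
    using False by (simp add: extr_numer_eq_mult_S_extr[OF assms] degree_mult_eq degree_power_eq)
  ultimately show ?thesis by simp
qed simp

lemma S_extr_extremal:
  fixes p :: "real poly"
  assumes n: "2 \<le> n" and deg: "degree p \<le> n - 2"
    and nonneg: "\<forall>x\<in>{-1..1}. 0 \<le> poly p x" and p_1: "poly p 1 = 1"
    and bound: "\<forall>x\<in>{-1..1}. \<bar>(1 - x)^2 * poly p x\<bar> \<le> M"
  shows "2 * extr_const n \<le> M" and "M = 2 * extr_const n \<Longrightarrow> p = S_extr n"
proof -
  define c where "c = extr_const n"
  define g where "g = smult (M / (2 * c)) (S_extr n) - p"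
  have "0 < c" using extr_const_pos[OF n] by (simp add: c_def)
  have alternating: "0 \<le> (-1)^(k - 2) * poly g (extr_node n k)" if k: "k \<in> {2..n}" for k
  proof -
    define x where "x = extr_node n k"
    have "-1 \<le> x" "x < 1" using extr_node_bounds[of k n] k by (auto simp: x_def)
    then have "0 < (1 - x)^2" "\<bar>(1 - x)^2 * poly p x\<bar> \<le> M" "0 \<le> poly p x"
      using bound nonneg by auto
    have "(1 - x)^2 * poly (S_extr n) x = c * (1 + (-1)^k)"
      using poly_extr_numer_node[OF n, of k] poly_extr_numer_eq_S_extr[OF n, of x]
      by (simp add: x_def c_def)
    then have g_x: "(1 - x)^2 * poly g x = M / 2 * (1 + (-1)^k) - (1 - x)^2 * poly p x"
      using \<open>0 < c\<close> by (simp add: g_def algebra_simps, simp add: field_simps)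
    show ?thesis
    proof (cases "even k")
      case True
      then have "0 \<le> (1 - x)^2 * poly g x" using g_x \<open>\<bar>(1 - x)^2 * poly p x\<bar> \<le> M\<close> by simp
      then show ?thesis using True k \<open>0 < (1 - x)^2\<close> by (simp add: x_def zero_le_mult_iff)
    next
      case False
      then have "(1 - x)^2 * poly g x \<le> 0" using g_x \<open>0 \<le> poly p x\<close> by simp
      then show ?thesis using False k \<open>0 < (1 - x)^2\<close> by (simp add: x_def mult_le_0_iff)
    qed
  qed
  have "degree g \<le> n - 2"
    using deg degree_S_extr[OF n] unfolding g_def
    by (metis degree_diff_le degree_smult_le order.trans)
  then have g_1: "0 \<le> poly g 1" "poly g 1 = 0 \<Longrightarrow> g = 0"
    using alternating_at_nodes_imp_poly_nonneg[of 2 n "extr_node n" 1 g] alternating n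
      extr_node_strict_decreasing[OF n] extr_node_bounds by auto
  have "poly g 1 = M / (2 * c) - 1" by (simp add: g_def poly_S_extr_1[OF n] p_1)
  then have "1 \<le> M / (2 * c)" using g_1(1) by simp
  then show "2 * extr_const n \<le> M" using \<open>0 < c\<close> by (simp add: c_def field_simps)
  assume "M = 2 * extr_const n"
  then have "g = 0" using g_1(2) \<open>poly g 1 = M / (2 * c) - 1\<close> \<open>0 < c\<close> by (simp add: c_def)
  then show "p = S_extr n" using \<open>M = 2 * extr_const n\<close> \<open>0 < c\<close> by (simp add: g_def c_def)
qed

theorem proposition1p5:
  fixes n :: nat and p :: "real poly"
  assumes "n \<ge> 2"
    and "degree p \<le> n - 2"
    and "\<forall>x\<in>{-1..1}. poly p x \<ge> 0"
    and "poly p 1 = 1"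
  shows "(SUP x\<in>{-1..1::real}. \<bar>(1 - x)^2 * poly p x\<bar>) \<ge> 16 / (real n)^2 * (tan (pi / (2 * real n)))^2
    \<and> ((SUP x\<in>{-1..1::real}. \<bar>(1 - x)^2 * poly p x\<bar>) = 16 / (real n)^2 * (tan (pi / (2 * real n)))^2
         \<longleftrightarrow> p = S_extr n)"
proof -
  define M where "M = (SUP x\<in>{-1..1::real}. \<bar>(1 - x)^2 * poly p x\<bar>)"
  have "bdd_above ((\<lambda>x. \<bar>(1 - x)^2 * poly p x\<bar>) ` {-1..1::real})"
    by (intro bounded_imp_bdd_above compact_imp_bounded compact_continuous_image continuous_intros)
      auto
  then have "\<forall>x\<in>{-1..1}. \<bar>(1 - x)^2 * poly p x\<bar> \<le> M"
    unfolding M_def by (auto intro: cSUP_upper)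
  note minimal = S_extr_extremal[OF assms this]
  have "M \<le> 2 * extr_const n" if "p = S_extr n"
    unfolding M_def that
    by (rule cSUP_least)
      (auto simp: poly_extr_numer_eq_S_extr[OF assms(1), symmetric]
            intro!: abs_poly_extr_numer_le assms(1))
  moreover have "16 / (real n)^2 * (tan (pi / (2 * real n)))^2 = 2 * extr_const n"
    by (simp add: extr_const_def)
  ultimately show ?thesis using minimal unfolding M_def[symmetric] by auto
qed

end
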